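(* Let $G,H$ be finite simple graphs, $x\in V(G)$, $y\in V(H)$. Then the graph $\big(S(x)*B(y)\big)\cup\big(B(x)*S(y)\big)$ (that is, the unit sphere $S_{G*H}(x,y)$) is homotopic to the join $S(x)\oplus S(y)$: the clique complexes of the two graphs are homotopy equivalent. In particular $\chi(S_{G*H}(x,y))=\chi(S(x)\oplus S(y))$.
   Context: All graphs are finite simple graphs. For a vertex $x$ of $G$, $S(x)$ is the subgraph induced on the vertices adjacent to $x$, and $B(x)$ is the subgraph induced on $V(S(x))\cup\{x\}$. The strong product $G*H$ has vertex set $V(G)\times V(H)$, two distinct vertices $(a,b),(c,d)$ being adjacent iff ($a=c$ or $a\sim c$ in $G$) and ($b=d$ or $b\sim d$ in $H$); for induced subgraphs $A\subseteq G$, $C\subseteq H$, $A*C$ is the subgraph of $G*H$ induced on $V(A)\times V(C)$, and a union of such subgraphs means the subgraph induced on the union of vertex sets. The (Zykov) join $A\oplus C$ of two graphs is their disjoint union together with all edges between a vertex of $A$ and a vertex of $C$. The clique (Whitney) complex of a graph is the simplicial complex of its vertex sets of complete subgraphs. The Euler characteristic is $\chi(G)=\sum_{k\ge0}(-1)^k f_k(G)$, where $f_k(G)$ is the number of complete subgraphs with $k+1$ vertices ($\chi$ of the empty graph is $0$). *)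

theory Defs
  imports "HOL-Analysis.Analysis"
begin

type_synonym 'a graph = "'a set \<times> ('a \<Rightarrow> 'a \<Rightarrow> bool)"

definition verts :: "'a graph \<Rightarrow> 'a set" where "verts G = fst G"
definition adj :: "'a graph \<Rightarrow> 'a \<Rightarrow> 'a \<Rightarrow> bool" where "adj G = snd G"

definition fin_simple_graph :: "'a graph \<Rightarrow> bool" where
  "fin_simple_graph G \<longleftrightarrow> finite (verts G)
     \<and> (\<forall>x y. adj G x y \<longrightarrow> x \<in> verts G \<and> y \<in> verts G)
     \<and> (\<forall>x. \<not> adj G x x)
     \<and> (\<forall>x y. adj G x y \<longrightarrow> adj G y x)"

definition induced :: "'a graph \<Rightarrow> 'a set \<Rightarrow> 'a graph" where
  "induced G U = (verts G \<inter> U, \<lambda>x y. adj G x y \<and> x \<in> U \<and> y \<in> U)"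

definition usphere :: "'a graph \<Rightarrow> 'a \<Rightarrow> 'a graph" where
  "usphere G x = induced G {y \<in> verts G. adj G x y}"

definition uball :: "'a graph \<Rightarrow> 'a \<Rightarrow> 'a graph" where
  "uball G x = induced G ({y \<in> verts G. adj G x y} \<union> {x})"

definition strong_prod :: "'a graph \<Rightarrow> 'b graph \<Rightarrow> ('a \<times> 'b) graph" where
  "strong_prod G H = (verts G \<times> verts H,
     \<lambda>(a,b) (c,d). (a,b) \<noteq> (c,d) \<and> (a,b) \<in> verts G \<times> verts H \<and> (c,d) \<in> verts G \<times> verts H
        \<and> (a = c \<or> adj G a c) \<and> (b = d \<or> adj H b d))"

definition zjoin :: "'a graph \<Rightarrow> 'b graph \<Rightarrow> ('a + 'b) graph" where
  "zjoin A C = (Inl ` verts A \<union> Inr ` verts C,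
     \<lambda>u v. case (u, v) of
        (Inl a, Inl b) \<Rightarrow> adj A a b
      | (Inr a, Inr b) \<Rightarrow> adj C a b
      | (Inl a, Inr b) \<Rightarrow> a \<in> verts A \<and> b \<in> verts C
      | (Inr a, Inl b) \<Rightarrow> a \<in> verts C \<and> b \<in> verts A)"

definition cliques :: "'a graph \<Rightarrow> 'a set set" where
  "cliques G = {s. s \<subseteq> verts G \<and> s \<noteq> {} \<and> (\<forall>a\<in>s. \<forall>b\<in>s. a \<noteq> b \<longrightarrow> adj G a b)}"

definition euler_char :: "'a graph \<Rightarrow> int" where
  "euler_char G = (\<Sum>s\<in>cliques G. (-1) ^ (card s - 1))"

text \<open>Geometric realization of the clique complex: barycentric-coordinate functions
  whose support is a simplex, as a subspace of the product space 'a => real.\<close>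
definition realization :: "'a graph \<Rightarrow> ('a \<Rightarrow> real) set" where
  "realization G = {f. (\<forall>v. 0 \<le> f v) \<and> {v. f v \<noteq> 0} \<in> cliques G
                        \<and> sum f {v. f v \<noteq> 0} = 1}"

definition clique_complex_homotopy_equivalent :: "'a graph \<Rightarrow> 'b graph \<Rightarrow> bool" where
  "clique_complex_homotopy_equivalent G H \<longleftrightarrow>
     top_of_set (realization G) homotopy_equivalent_space top_of_set (realization H)"

end

theory Submission
  imports Defs
begin

text \<open>
  Write \<open>A\<close> and \<open>B\<close> for the vertex sets of \<open>S(x)\<close> and \<open>S(y)\<close>. The vertex maps
  \<open>(a, b) \<mapsto> b\<close> if \<open>a = x\<close> and \<open>(a, b) \<mapsto> a\<close> otherwise, from the sphere into the join, and
  \<open>a \<mapsto> (a, y)\<close>, \<open>b \<mapsto> (x, b)\<close> back, are simplicial. Going to the join and back is the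
  identity; going to the sphere and back replaces each \<open>(a, b)\<close> with \<open>a \<noteq> x\<close> by its shadow
  \<open>(a, y)\<close>, and a clique stays a clique when all these shadows are added, so this map is
  contiguous to the identity. Contiguous simplicial maps induce homotopic maps of the
  geometric realizations (by the straight-line homotopy), which gives the homotopy equivalence.

  For the Euler characteristic, the cliques of the sphere avoiding \<open>A \<times> B\<close> are exactly the images
  of the cliques of the join, while on the cliques meeting \<open>A \<times> B\<close>, toggling the shadow of a
  chosen vertex in \<open>A \<times> B\<close> is a sign-reversing involution.
\<close>

section \<open>Geometric realizations of clique complexes\<close>

lemma clique_subset: "\<tau> \<in> cliques K \<Longrightarrow> \<sigma> \<subseteq> \<tau> \<Longrightarrow> \<sigma> \<noteq> {} \<Longrightarrow> \<sigma> \<in> cliques K"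
  unfolding cliques_def by auto

lemma singleton_clique: "v \<in> verts K \<Longrightarrow> {v} \<in> cliques K"
  unfolding cliques_def by auto

lemma finite_clique: "finite (verts K) \<Longrightarrow> \<sigma> \<in> cliques K \<Longrightarrow> finite \<sigma>"
  unfolding cliques_def by (auto intro: finite_subset)

lemma finite_cliques: "finite (verts K) \<Longrightarrow> finite (cliques K)"
  by (rule finite_subset[of _ "Pow (verts K)"]) (auto simp: cliques_def)

lemma realization_nonneg: "f \<in> realization K \<Longrightarrow> 0 \<le> f v"
  unfolding realization_def by blast

lemma realization_support: "f \<in> realization K \<Longrightarrow> {v. f v \<noteq> 0} \<in> cliques K"
  unfolding realization_def by blast

lemma realization_support_verts: "f \<in> realization K \<Longrightarrow> f v \<noteq> 0 \<Longrightarrow> v \<in> verts K"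
  using realization_support[of f K] unfolding cliques_def by auto

lemma sum_realization:
  assumes "finite (verts K)" "f \<in> realization K"
  shows "sum f (verts K) = 1"
proof -
  have "sum f (verts K) = sum f {v. f v \<noteq> 0}"
    by (rule sum.mono_neutral_right[OF assms(1)]) (auto dest: realization_support_verts[OF assms(2)])
  with assms(2) show ?thesis unfolding realization_def by simp
qed

lemma realizationI:
  assumes "finite (verts K)" "\<And>v. 0 \<le> g v" "{v. g v \<noteq> 0} \<subseteq> \<tau>" "\<tau> \<in> cliques K" "sum g \<tau> = 1"
  shows "g \<in> realization K"
proof -
  have "sum g {v. g v \<noteq> 0} = sum g \<tau>"
    by (rule sum.mono_neutral_left[OF finite_clique[OF assms(1,4)] assms(3)]) auto
  with assms(5) have "sum g {v. g v \<noteq> 0} = 1" by simp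
  moreover from this have "{v. g v \<noteq> 0} \<in> cliques K"
    using clique_subset[OF assms(4,3)] by force
  ultimately show ?thesis unfolding realization_def using assms(2) by simp
qed

definition realize_map :: "'u graph \<Rightarrow> ('u \<Rightarrow> 'v) \<Rightarrow> ('u \<Rightarrow> real) \<Rightarrow> ('v \<Rightarrow> real)" where
  "realize_map K p f = (\<lambda>w. \<Sum>v\<in>verts K. if p v = w then f v else 0)"

lemma realize_map_nonneg: "f \<in> realization K \<Longrightarrow> 0 \<le> realize_map K p f w"
  unfolding realize_map_def by (rule sum_nonneg) (simp add: realization_nonneg)

lemma realize_map_support: "{w. realize_map K p f w \<noteq> 0} \<subseteq> p ` {v. f v \<noteq> 0}"
  unfolding realize_map_def by (force elim: sum.not_neutral_contains_not_neutral split: if_splits)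

lemma sum_realize_map:
  assumes "finite (verts K)" "f \<in> realization K" "finite T" "p ` {v. f v \<noteq> 0} \<subseteq> T"
  shows "sum (realize_map K p f) T = 1"
proof -
  have "sum (realize_map K p f) T = (\<Sum>v\<in>verts K. \<Sum>w\<in>T. if p v = w then f v else 0)"
    unfolding realize_map_def by (rule sum.swap)
  also have "\<dots> = (\<Sum>v\<in>verts K. f v)"
    using assms(3,4) by (intro sum.cong refl) auto
  finally show ?thesis using sum_realization[OF assms(1,2)] by simp
qed

lemma realize_map_comp:
  assumes "finite (verts L)" "p ` verts K \<subseteq> verts L"
  shows "realize_map L q (realize_map K p f) = realize_map K (q \<circ> p) f"
proof
  fix u
  have "realize_map L q (realize_map K p f) u
      = (\<Sum>w\<in>verts L. \<Sum>v\<in>verts K. if p v = w then (if q w = u then f v else 0) else 0)"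
    unfolding realize_map_def by (intro sum.cong refl) (simp cong: if_cong)
  also have "\<dots> = (\<Sum>v\<in>verts K. \<Sum>w\<in>verts L. if p v = w then (if q w = u then f v else 0) else 0)"
    by (rule sum.swap)
  also have "\<dots> = realize_map K (q \<circ> p) f u"
    unfolding realize_map_def using assms by (intro sum.cong refl) auto
  finally show "realize_map L q (realize_map K p f) u = realize_map K (q \<circ> p) f u" .
qed

lemma realize_map_id:
  assumes "finite (verts K)" "f \<in> realization K"
  shows "realize_map K id f = f"
proof
  fix u show "realize_map K id f u = f u"
    unfolding realize_map_def id_def using assms realization_support_verts[OF assms(2), of u]
    by (auto simp: sum.delta)
qed

lemma continuous_map_realize_map:
  assumes "finite (verts K)" "continuous_map X euclidean g"
  shows "continuous_map X euclideanreal (\<lambda>z. realize_map K p (g z) w)"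
proof -
  have "continuous_map X euclideanreal (\<lambda>z. g z v)" for v
    using continuous_map_compose[OF assms(2), of euclideanreal "\<lambda>f. f v"]
      continuous_map_product_projection[of v UNIV "\<lambda>_. euclideanreal"]
    by (simp add: euclidean_product_topology o_def)
  then show ?thesis
    unfolding realize_map_def by (intro continuous_map_sum assms(1)) auto
qed

definition simplicial_map :: "'u graph \<Rightarrow> 'v graph \<Rightarrow> ('u \<Rightarrow> 'v) \<Rightarrow> bool" where
  "simplicial_map K L p \<longleftrightarrow> (\<forall>\<sigma>\<in>cliques K. p ` \<sigma> \<in> cliques L)"

definition contiguous :: "'u graph \<Rightarrow> 'v graph \<Rightarrow> ('u \<Rightarrow> 'v) \<Rightarrow> ('u \<Rightarrow> 'v) \<Rightarrow> bool" where
  "contiguous K L p p' \<longleftrightarrow> (\<forall>\<sigma>\<in>cliques K. p ` \<sigma> \<union> p' ` \<sigma> \<in> cliques L)"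

lemma contiguous_refl: "simplicial_map K L p \<Longrightarrow> contiguous K L p p"
  unfolding simplicial_map_def contiguous_def by simp

lemma simplicial_map_verts:
  assumes "simplicial_map K L p"
  shows "p ` verts K \<subseteq> verts L"
proof
  fix w assume "w \<in> p ` verts K"
  then obtain v where "v \<in> verts K" "w = p v" by blast
  then have "{w} \<in> cliques L"
    using assms singleton_clique[of v K] unfolding simplicial_map_def by force
  then show "w \<in> verts L" unfolding cliques_def by simp
qed

lemma continuous_map_into_function_space:
  assumes "\<And>w. continuous_map X euclideanreal (\<lambda>z. F z w)"
  shows "continuous_map X (euclidean :: ('v \<Rightarrow> real) topology) F"
  using assms unfolding euclidean_product_topology[symmetric]
  by (simp add: continuous_map_componentwise_UNIV)

lemma contiguous_convex_combination_in_realization: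
  assumes "finite (verts K)" "finite (verts L)" "contiguous K L p p'"
    and "f \<in> realization K" "0 \<le> t" "t \<le> 1"
  shows "(\<lambda>w. (1 - t) * realize_map K p f w + t * realize_map K p' f w) \<in> realization L"
proof -
  define \<tau> where "\<tau> = p ` {v. f v \<noteq> 0} \<union> p' ` {v. f v \<noteq> 0}"
  have \<tau>: "\<tau> \<in> cliques L"
    using assms(3) realization_support[OF assms(4)] unfolding \<tau>_def contiguous_def by blast
  have "finite \<tau>" using finite_clique[OF assms(2) \<tau>] .
  moreover have "p ` {v. f v \<noteq> 0} \<subseteq> \<tau>" "p' ` {v. f v \<noteq> 0} \<subseteq> \<tau>"
    unfolding \<tau>_def by auto
  ultimately have "sum (realize_map K p f) \<tau> = 1" "sum (realize_map K p' f) \<tau> = 1"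
    using sum_realize_map[OF assms(1,4)] by blast+
  then have sum: "(\<Sum>w\<in>\<tau>. (1 - t) * realize_map K p f w + t * realize_map K p' f w) = 1"
    by (simp add: sum.distrib flip: sum_distrib_left)
  have supp: "{w. (1 - t) * realize_map K p f w + t * realize_map K p' f w \<noteq> 0} \<subseteq> \<tau>"
    using realize_map_support[of K p f] realize_map_support[of K p' f] unfolding \<tau>_def by fastforce
  have nonneg: "0 \<le> (1 - t) * realize_map K p f w + t * realize_map K p' f w" for w
    using assms(5,6) by (intro add_nonneg_nonneg mult_nonneg_nonneg realize_map_nonneg[OF assms(4)]) simp_all
  show ?thesis using realizationI[OF assms(2) nonneg supp \<tau> sum] .
qed

lemma contiguous_realize_map_homotopic:
  assumes "finite (verts K)" "finite (verts L)" "contiguous K L p p'"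
  shows "homotopic_with (\<lambda>_. True) (top_of_set (realization K)) (top_of_set (realization L))
           (realize_map K p) (realize_map K p')"
  unfolding homotopic_with_def
proof (intro exI conjI ballI)
  let ?Z = "prod_topology (top_of_set {0..1::real}) (top_of_set (realization K))"
  let ?h = "\<lambda>z w. (1 - fst z) * realize_map K p (snd z) w + fst z * realize_map K p' (snd z) w"
  have fst: "continuous_map ?Z euclideanreal fst" and snd: "continuous_map ?Z euclidean snd"
    using continuous_map_fst[of "top_of_set {0..1::real}" "top_of_set (realization K)"]
      continuous_map_snd[of "top_of_set {0..1::real}" "top_of_set (realization K)"]
    by (simp_all add: continuous_map_in_subtopology)
  have "continuous_map ?Z euclidean ?h"
  proof (rule continuous_map_into_function_space)
    fix w
    show "continuous_map ?Z euclideanreal (\<lambda>z. ?h z w)"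
      by (intro continuous_map_add continuous_map_real_mult continuous_map_diff fst
          continuous_map_realize_map[OF assms(1) snd]) simp
  qed
  moreover have "?h ` topspace ?Z \<subseteq> realization L"
    using contiguous_convex_combination_in_realization[OF assms] by auto
  ultimately show "continuous_map ?Z (top_of_set (realization L)) ?h"
    by (simp add: continuous_map_in_subtopology image_subset_iff_funcset)
qed auto

lemma homotopy_equivalent_realizations:
  assumes fin: "finite (verts K)" "finite (verts L)"
    and p: "simplicial_map K L p" and q: "simplicial_map L K q"
    and qp: "contiguous K K (q \<circ> p) id" and pq: "contiguous L L (p \<circ> q) id"
  shows "top_of_set (realization K) homotopy_equivalent_space top_of_set (realization L)"
  unfolding homotopy_equivalent_space_def
proof (intro exI conjI)
  show "continuous_map (top_of_set (realization K)) (top_of_set (realization L)) (realize_map K p)"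
    using contiguous_realize_map_homotopic[OF fin contiguous_refl[OF p]]
    by (blast dest: homotopic_with_imp_continuous_maps)
  show "continuous_map (top_of_set (realization L)) (top_of_set (realization K)) (realize_map L q)"
    using contiguous_realize_map_homotopic[OF fin(2,1) contiguous_refl[OF q]]
    by (blast dest: homotopic_with_imp_continuous_maps)
  show "homotopic_with (\<lambda>_. True) (top_of_set (realization K)) (top_of_set (realization K))
          (realize_map L q \<circ> realize_map K p) id"
    using contiguous_realize_map_homotopic[OF fin(1,1) qp]
    by (rule homotopic_with_eq)
      (simp_all add: realize_map_comp[OF fin(2) simplicial_map_verts[OF p]] realize_map_id[OF fin(1)])
  show "homotopic_with (\<lambda>_. True) (top_of_set (realization L)) (top_of_set (realization L))
          (realize_map K p \<circ> realize_map L q) id"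
    using contiguous_realize_map_homotopic[OF fin(2,2) pq]
    by (rule homotopic_with_eq)
      (simp_all add: realize_map_comp[OF fin(1) simplicial_map_verts[OF q]] realize_map_id[OF fin(2)])
qed

section \<open>Strong products, unit spheres and joins\<close>

definition adj_or_eq :: "'a graph \<Rightarrow> 'a \<Rightarrow> 'a \<Rightarrow> bool" where
  "adj_or_eq G a b \<longleftrightarrow> a = b \<or> adj G a b"

lemma fin_simple_graph_finite: "fin_simple_graph G \<Longrightarrow> finite (verts G)"
  and fin_simple_graph_irrefl: "fin_simple_graph G \<Longrightarrow> \<not> adj G a a"
  and fin_simple_graph_sym: "fin_simple_graph G \<Longrightarrow> adj G a b \<Longrightarrow> adj G b a"
  unfolding fin_simple_graph_def by blast+

lemma adj_or_eq_refl [simp]: "adj_or_eq G a a"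
  unfolding adj_or_eq_def by simp

lemma adj_or_eq_sym: "fin_simple_graph G \<Longrightarrow> adj_or_eq G a b \<Longrightarrow> adj_or_eq G b a"
  unfolding adj_or_eq_def by (auto dest: fin_simple_graph_sym)

lemma verts_induced: "verts (induced G U) = verts G \<inter> U"
  and adj_induced: "adj (induced G U) a b \<longleftrightarrow> adj G a b \<and> a \<in> U \<and> b \<in> U"
  unfolding induced_def verts_def adj_def by simp_all

lemma verts_usphere: "verts (usphere G x) = {a \<in> verts G. adj G x a}"
  unfolding usphere_def verts_induced by auto

lemma adj_usphere:
  "adj (usphere G x) a b \<longleftrightarrow> adj G a b \<and> a \<in> verts (usphere G x) \<and> b \<in> verts (usphere G x)"
  unfolding usphere_def adj_induced verts_induced by auto

lemma verts_uball: "x \<in> verts G \<Longrightarrow> verts (uball G x) = insert x (verts (usphere G x))"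
  unfolding uball_def verts_induced verts_usphere by auto

lemma verts_strong_prod: "verts (strong_prod G H) = verts G \<times> verts H"
  unfolding strong_prod_def verts_def by simp

lemma adj_strong_prod:
  "adj (strong_prod G H) z w \<longleftrightarrow> z \<noteq> w \<and> z \<in> verts G \<times> verts H \<and> w \<in> verts G \<times> verts H \<and>
     adj_or_eq G (fst z) (fst w) \<and> adj_or_eq H (snd z) (snd w)"
  by (cases z; cases w) (simp add: strong_prod_def adj_def verts_def adj_or_eq_def)

lemma cliques_induced_strong_prod:
  assumes "U \<subseteq> verts G \<times> verts H"
  shows "\<sigma> \<in> cliques (induced (strong_prod G H) U) \<longleftrightarrow> \<sigma> \<subseteq> U \<and> \<sigma> \<noteq> {} \<and>
           (\<forall>z\<in>\<sigma>. \<forall>w\<in>\<sigma>. adj_or_eq G (fst z) (fst w) \<and> adj_or_eq H (snd z) (snd w))"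
proof -
  let ?adj = "\<lambda>z w. adj_or_eq G (fst z) (fst w) \<and> adj_or_eq H (snd z) (snd w)"
  have "\<sigma> \<in> cliques (induced (strong_prod G H) U) \<longleftrightarrow>
      \<sigma> \<subseteq> U \<and> \<sigma> \<noteq> {} \<and> (\<forall>z\<in>\<sigma>. \<forall>w\<in>\<sigma>. z \<noteq> w \<longrightarrow> ?adj z w)"
    using assms unfolding cliques_def verts_induced adj_induced verts_strong_prod adj_strong_prod
    by auto
  also have "\<dots> \<longleftrightarrow> \<sigma> \<subseteq> U \<and> \<sigma> \<noteq> {} \<and> (\<forall>z\<in>\<sigma>. \<forall>w\<in>\<sigma>. ?adj z w)"
    by (metis adj_or_eq_refl)
  finally show ?thesis .
qed

lemma verts_zjoin: "verts (zjoin K L) = Inl ` verts K \<union> Inr ` verts L"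
  unfolding zjoin_def verts_def by simp

lemma cliques_zjoin:
  "\<tau> \<in> cliques (zjoin K L) \<longleftrightarrow> \<tau> \<subseteq> Inl ` verts K \<union> Inr ` verts L \<and> \<tau> \<noteq> {} \<and>
     (\<forall>a a'. Inl a \<in> \<tau> \<longrightarrow> Inl a' \<in> \<tau> \<longrightarrow> a \<noteq> a' \<longrightarrow> adj K a a') \<and>
     (\<forall>b b'. Inr b \<in> \<tau> \<longrightarrow> Inr b' \<in> \<tau> \<longrightarrow> b \<noteq> b' \<longrightarrow> adj L b b')"
  unfolding cliques_def verts_zjoin by (auto simp: zjoin_def adj_def split: sum.split)

section \<open>Cancellation by toggling a vertex\<close>

definition toggle :: "'a \<Rightarrow> 'a set \<Rightarrow> 'a set" where
  "toggle a \<sigma> = (if a \<in> \<sigma> then \<sigma> - {a} else insert a \<sigma>)"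

lemma toggle_toggle [simp]: "toggle a (toggle a \<sigma>) = \<sigma>"
  unfolding toggle_def by auto

lemma toggle_subset: "toggle a \<sigma> \<subseteq> insert a \<sigma>"
  unfolding toggle_def by auto

lemma toggle_inter_eq: "a \<notin> X \<Longrightarrow> toggle a \<sigma> \<inter> X = \<sigma> \<inter> X"
  unfolding toggle_def by auto

lemma sum_sign_toggle_eq_0:
  fixes e :: "'a set \<Rightarrow> 'a"
  assumes fin: "\<And>\<sigma>. \<sigma> \<in> C \<Longrightarrow> finite \<sigma> \<and> \<sigma> \<noteq> {}"
    and closed: "\<And>\<sigma>. \<sigma> \<in> C \<Longrightarrow> toggle (e \<sigma>) \<sigma> \<in> C"
    and stable: "\<And>\<sigma>. \<sigma> \<in> C \<Longrightarrow> e (toggle (e \<sigma>) \<sigma>) = e \<sigma>"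
  shows "(\<Sum>\<sigma>\<in>C. (-1::int) ^ (card \<sigma> - 1)) = 0"
proof (rule sum_involution_eq_0[where h = "\<lambda>\<sigma>. toggle (e \<sigma>) \<sigma>"])
  fix \<sigma> assume \<sigma>: "\<sigma> \<in> C"
  let ?\<tau> = "toggle (e \<sigma>) \<sigma>"
  show "?\<tau> \<in> C" "toggle (e ?\<tau>) ?\<tau> = \<sigma>"
    using closed[OF \<sigma>] stable[OF \<sigma>] by simp_all
  show "?\<tau> \<noteq> \<sigma>" unfolding toggle_def by auto
  have "card ?\<tau> = Suc (card \<sigma>) \<or> card \<sigma> = Suc (card ?\<tau>)"
    using fin[OF \<sigma>] card_Suc_Diff1[of \<sigma> "e \<sigma>"] card_insert_disjoint[of \<sigma> "e \<sigma>"]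
    unfolding toggle_def by (cases "e \<sigma> \<in> \<sigma>") simp_all
  moreover have "card \<sigma> \<noteq> 0" "card ?\<tau> \<noteq> 0"
    using fin[OF \<sigma>] fin[OF closed[OF \<sigma>]] by simp_all
  moreover have "(-1::int) ^ n + (-1) ^ (n - 1) = 0" if "n \<noteq> 0" for n
    using that by (cases n) simp_all
  ultimately show "(-1::int) ^ (card ?\<tau> - 1) + (-1) ^ (card \<sigma> - 1) = 0"
    by (metis add.commute diff_Suc_1)
qed

section \<open>The unit sphere of a strong product\<close>

locale strong_product_sphere =
  fixes G :: "'a graph" and H :: "'b graph" and x :: 'a and y :: 'b
  assumes G: "fin_simple_graph G" and H: "fin_simple_graph H"
    and x: "x \<in> verts G" and y: "y \<in> verts H"
begin

abbreviation "A \<equiv> verts (usphere G x)"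
abbreviation "B \<equiv> verts (usphere H y)"

definition S :: "('a \<times> 'b) graph" where
  "S = induced (strong_prod G H) (A \<times> verts (uball H y) \<union> verts (uball G x) \<times> B)"

definition J :: "('a + 'b) graph" where
  "J = zjoin (usphere G x) (usphere H y)"

definition to_join :: "'a \<times> 'b \<Rightarrow> 'a + 'b" where
  "to_join z = (if fst z = x then Inr (snd z) else Inl (fst z))"

definition from_join :: "'a + 'b \<Rightarrow> 'a \<times> 'b" where
  "from_join = case_sum (\<lambda>a. (a, y)) (\<lambda>b. (x, b))"

definition shadow :: "('a \<times> 'b) set \<Rightarrow> ('a \<times> 'b) set" where
  "shadow \<sigma> = (\<lambda>z. (fst z, y)) ` {z \<in> \<sigma>. fst z \<noteq> x}"

lemma x_notin_A: "x \<notin> A" and y_notin_B: "y \<notin> B"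
  unfolding verts_usphere using fin_simple_graph_irrefl[OF G] fin_simple_graph_irrefl[OF H] by simp_all

lemma verts_S: "verts S = A \<times> insert y B \<union> insert x A \<times> B"
  unfolding S_def verts_induced verts_strong_prod verts_uball[OF x] verts_uball[OF y]
  using x y by (auto simp: verts_usphere)

lemma verts_J: "verts J = Inl ` A \<union> Inr ` B"
  unfolding J_def by (rule verts_zjoin)

lemma finite_A: "finite A" and finite_B: "finite B"
  unfolding verts_usphere using fin_simple_graph_finite[OF G] fin_simple_graph_finite[OF H] by simp_all

lemma finite_verts_S: "finite (verts S)" and finite_verts_J: "finite (verts J)"
  unfolding verts_S verts_J using finite_A finite_B by simp_all

lemma adj_or_eq_centre: "z \<in> verts S \<Longrightarrow> adj_or_eq G x (fst z) \<and> adj_or_eq H y (snd z)"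
  unfolding verts_S adj_or_eq_def verts_usphere by auto

lemma cliques_S:
  "\<sigma> \<in> cliques S \<longleftrightarrow> \<sigma> \<subseteq> verts S \<and> \<sigma> \<noteq> {} \<and>
     (\<forall>z\<in>\<sigma>. \<forall>w\<in>\<sigma>. adj_or_eq G (fst z) (fst w) \<and> adj_or_eq H (snd z) (snd w))"
proof -
  have sub: "A \<times> verts (uball H y) \<union> verts (uball G x) \<times> B \<subseteq> verts G \<times> verts H"
    using x y unfolding verts_uball[OF x] verts_uball[OF y] verts_usphere by auto
  show ?thesis
    unfolding S_def verts_induced verts_strong_prod cliques_induced_strong_prod[OF sub]
    using sub by blast
qed

lemma cliques_J:
  "\<tau> \<in> cliques J \<longleftrightarrow> \<tau> \<subseteq> verts J \<and> \<tau> \<noteq> {} \<and>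
     (\<forall>a a'. Inl a \<in> \<tau> \<longrightarrow> Inl a' \<in> \<tau> \<longrightarrow> a \<noteq> a' \<longrightarrow> adj G a a') \<and>
     (\<forall>b b'. Inr b \<in> \<tau> \<longrightarrow> Inr b' \<in> \<tau> \<longrightarrow> b \<noteq> b' \<longrightarrow> adj H b b')"
proof -
  have "\<tau> \<subseteq> verts J \<Longrightarrow> Inl a \<in> \<tau> \<Longrightarrow> a \<in> A"
    and "\<tau> \<subseteq> verts J \<Longrightarrow> Inr b \<in> \<tau> \<Longrightarrow> b \<in> B" for a b
    unfolding verts_J by auto
  then show ?thesis
    unfolding cliques_zjoin adj_usphere J_def verts_zjoin[symmetric] by meson
qed

lemma Inl_in_to_join_image: "Inl a \<in> to_join ` \<sigma> \<longleftrightarrow> a \<noteq> x \<and> (\<exists>b. (a, b) \<in> \<sigma>)"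
proof -
  have "Inl a = to_join z \<longleftrightarrow> a \<noteq> x \<and> fst z = a" for z
    unfolding to_join_def by auto
  then show ?thesis unfolding image_iff by (metis fst_conv prod.collapse)
qed

lemma Inr_in_to_join_image: "Inr b \<in> to_join ` \<sigma> \<longleftrightarrow> (x, b) \<in> \<sigma>"
proof -
  have "Inr b = to_join z \<longleftrightarrow> z = (x, b)" for z
    unfolding to_join_def by (cases z) auto
  then show ?thesis unfolding image_iff by auto
qed

lemma simplicial_to_join: "simplicial_map S J to_join"
  unfolding simplicial_map_def
proof
  fix \<sigma> assume "\<sigma> \<in> cliques S"
  then have \<sigma>: "\<sigma> \<subseteq> verts S" "\<sigma> \<noteq> {}"
    and adj: "\<And>z w. z \<in> \<sigma> \<Longrightarrow> w \<in> \<sigma> \<Longrightarrow> adj_or_eq G (fst z) (fst w) \<and> adj_or_eq H (snd z) (snd w)"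
    unfolding cliques_S by blast+
  have "to_join ` \<sigma> \<subseteq> verts J"
    using \<sigma>(1) x_notin_A unfolding verts_S verts_J to_join_def by auto
  moreover have "adj G a a'"
    if images: "Inl a \<in> to_join ` \<sigma>" "Inl a' \<in> to_join ` \<sigma>" and "a \<noteq> a'" for a a'
  proof -
    obtain b b' where "(a, b) \<in> \<sigma>" "(a', b') \<in> \<sigma>"
      using images unfolding Inl_in_to_join_image by blast
    then show ?thesis using adj[of "(a, b)" "(a', b')"] \<open>a \<noteq> a'\<close> unfolding adj_or_eq_def by simp
  qed
  moreover have "adj H b b'" if "Inr b \<in> to_join ` \<sigma>" "Inr b' \<in> to_join ` \<sigma>" "b \<noteq> b'" for b b'
    using that adj[of "(x, b)" "(x, b')"] unfolding Inr_in_to_join_image adj_or_eq_def by simp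
  ultimately show "to_join ` \<sigma> \<in> cliques J"
    unfolding cliques_J using \<sigma>(2) by simp
qed

lemma centre_adj_A: "a \<in> A \<Longrightarrow> adj G x a \<and> adj G a x"
  and centre_adj_B: "b \<in> B \<Longrightarrow> adj H y b \<and> adj H b y"
  unfolding verts_usphere using fin_simple_graph_sym[OF G] fin_simple_graph_sym[OF H] by auto

lemma from_join_Inl [simp]: "from_join (Inl a) = (a, y)"
  and from_join_Inr [simp]: "from_join (Inr b) = (x, b)"
  unfolding from_join_def by simp_all

lemma simplicial_from_join: "simplicial_map J S from_join"
  unfolding simplicial_map_def
proof
  fix \<tau> assume "\<tau> \<in> cliques J"
  then have \<tau>: "\<tau> \<subseteq> verts J" "\<tau> \<noteq> {}"
    and adjG: "\<And>a a'. Inl a \<in> \<tau> \<Longrightarrow> Inl a' \<in> \<tau> \<Longrightarrow> a \<noteq> a' \<Longrightarrow> adj G a a'"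
    and adjH: "\<And>b b'. Inr b \<in> \<tau> \<Longrightarrow> Inr b' \<in> \<tau> \<Longrightarrow> b \<noteq> b' \<Longrightarrow> adj H b b'"
    unfolding cliques_J by simp_all
  have "from_join ` \<tau> \<subseteq> verts S"
    using \<tau>(1) unfolding verts_J verts_S by auto
  moreover have "adj_or_eq G (fst (from_join v)) (fst (from_join w)) \<and>
      adj_or_eq H (snd (from_join v)) (snd (from_join w))" if "v \<in> \<tau>" "w \<in> \<tau>" for v w
  proof -
    have "v \<in> Inl ` A \<union> Inr ` B" "w \<in> Inl ` A \<union> Inr ` B"
      using that \<tau>(1) unfolding verts_J by blast+
    then show ?thesis
    proof (elim UnE imageE)
      fix a a' assume "a \<in> A" "v = Inl a" "a' \<in> A" "w = Inl a'"
      then show ?thesis using adjG[of a a'] that unfolding adj_or_eq_def by auto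
    next
      fix a b assume "a \<in> A" "v = Inl a" "b \<in> B" "w = Inr b"
      then show ?thesis using centre_adj_A centre_adj_B by (simp add: adj_or_eq_def)
    next
      fix a b assume "b \<in> B" "v = Inr b" "a \<in> A" "w = Inl a"
      then show ?thesis using centre_adj_A centre_adj_B by (simp add: adj_or_eq_def)
    next
      fix b b' assume "b \<in> B" "v = Inr b" "b' \<in> B" "w = Inr b'"
      then show ?thesis using adjH[of b b'] that unfolding adj_or_eq_def by auto
    qed
  qed
  ultimately show "from_join ` \<tau> \<in> cliques S"
    unfolding cliques_S using \<tau>(2) by simp
qed

lemma to_join_from_join: "w \<in> verts J \<Longrightarrow> to_join (from_join w) = w"
  unfolding verts_J to_join_def using x_notin_A by auto

lemma to_join_from_join_image: "\<tau> \<subseteq> verts J \<Longrightarrow> to_join ` from_join ` \<tau> = \<tau>"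
  unfolding image_comp by (simp add: to_join_from_join subset_iff cong: image_cong)

lemma from_join_to_join: "from_join (to_join z) = (if fst z = x then z else (fst z, y))"
  unfolding to_join_def by (cases z) simp

lemma shadow_clique:
  assumes "\<sigma> \<in> cliques S"
  shows "\<sigma> \<union> shadow \<sigma> \<in> cliques S"
proof -
  let ?T = "\<sigma> \<union> shadow \<sigma>"
  from assms have \<sigma>: "\<sigma> \<subseteq> verts S" "\<sigma> \<noteq> {}"
    and adj: "\<And>z w. z \<in> \<sigma> \<Longrightarrow> w \<in> \<sigma> \<Longrightarrow> adj_or_eq G (fst z) (fst w) \<and> adj_or_eq H (snd z) (snd w)"
    unfolding cliques_S by blast+
  have origin: "\<exists>z\<in>\<sigma>. fst v = fst z \<and> (v = z \<or> snd v = y)" if "v \<in> ?T" for v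
  proof -
    from that consider "v \<in> \<sigma>" | z where "z \<in> \<sigma>" "v = (fst z, y)"
      unfolding shadow_def by blast
    then show ?thesis by cases auto
  qed
  have T: "?T \<subseteq> verts S"
    using \<sigma>(1) unfolding verts_S shadow_def by auto
  have "adj_or_eq G (fst v) (fst w) \<and> adj_or_eq H (snd v) (snd w)"
    if vw: "v \<in> ?T" "w \<in> ?T" for v w
  proof
    obtain z z' where z: "z \<in> \<sigma>" "fst v = fst z" "v = z \<or> snd v = y"
      and z': "z' \<in> \<sigma>" "fst w = fst z'" "w = z' \<or> snd w = y"
      using origin[OF vw(1)] origin[OF vw(2)] by blast
    show "adj_or_eq G (fst v) (fst w)"
      using adj[OF z(1) z'(1)] z(2) z'(2) by simp
    have "adj_or_eq H y (snd v)" "adj_or_eq H y (snd w)"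
      using adj_or_eq_centre T vw by blast+
    then show "adj_or_eq H (snd v) (snd w)"
      using adj[OF z(1) z'(1)] z(3) z'(3) adj_or_eq_sym[OF H] by auto
  qed
  then show ?thesis
    unfolding cliques_S using T \<sigma>(2) by blast
qed

lemma contiguous_from_to_join: "contiguous S S (from_join \<circ> to_join) id"
  unfolding contiguous_def
proof
  fix \<sigma> assume \<sigma>: "\<sigma> \<in> cliques S"
  have "(from_join \<circ> to_join) ` \<sigma> \<union> id ` \<sigma> \<subseteq> \<sigma> \<union> shadow \<sigma>"
    unfolding comp_def from_join_to_join shadow_def by auto
  moreover have "(from_join \<circ> to_join) ` \<sigma> \<union> id ` \<sigma> \<noteq> {}"
    using \<sigma> unfolding cliques_def by simp
  ultimately show "(from_join \<circ> to_join) ` \<sigma> \<union> id ` \<sigma> \<in> cliques S"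
    using clique_subset[OF shadow_clique[OF \<sigma>]] by blast
qed

lemma contiguous_to_from_join: "contiguous J J (to_join \<circ> from_join) id"
  unfolding contiguous_def
proof
  fix \<tau> assume \<tau>: "\<tau> \<in> cliques J"
  then have "(to_join \<circ> from_join) ` \<tau> = \<tau>"
    using to_join_from_join_image unfolding cliques_def image_comp by simp
  then show "(to_join \<circ> from_join) ` \<tau> \<union> id ` \<tau> \<in> cliques J"
    using \<tau> by simp
qed

lemma homotopy_equivalent_S_J: "clique_complex_homotopy_equivalent S J"
  unfolding clique_complex_homotopy_equivalent_def
  using finite_verts_S finite_verts_J simplicial_to_join simplicial_from_join
    contiguous_from_to_join contiguous_to_from_join
  by (rule homotopy_equivalent_realizations)

lemma from_join_not_in_A_times_B: "from_join w \<notin> A \<times> B"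
  using x_notin_A y_notin_B by (cases w) simp_all

lemma from_join_to_join_image:
  assumes "\<sigma> \<subseteq> verts S" "\<sigma> \<inter> A \<times> B = {}"
  shows "from_join ` to_join ` \<sigma> = \<sigma>"
proof -
  have "from_join (to_join z) = z" if "z \<in> \<sigma>" for z
    using that assms x_notin_A unfolding verts_S from_join_to_join by auto
  then show ?thesis
    unfolding image_comp by (simp cong: image_cong)
qed

lemma bij_betw_cliques_J_avoiding:
  "bij_betw ((`) from_join) (cliques J) {\<sigma> \<in> cliques S. \<sigma> \<inter> A \<times> B = {}}"
proof (rule bij_betw_byWitness[where f' = "(`) to_join"])
  show "\<forall>\<tau>\<in>cliques J. to_join ` from_join ` \<tau> = \<tau>"
    using to_join_from_join_image unfolding cliques_def by simp
  show "\<forall>\<sigma>\<in>{\<sigma> \<in> cliques S. \<sigma> \<inter> A \<times> B = {}}. from_join ` to_join ` \<sigma> = \<sigma>"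
    using from_join_to_join_image unfolding cliques_def by simp
  have "from_join ` \<tau> \<inter> A \<times> B = {}" for \<tau>
    by (simp add: disjoint_eq_subset_Compl image_subset_iff from_join_not_in_A_times_B)
  then show "(`) from_join ` cliques J \<subseteq> {\<sigma> \<in> cliques S. \<sigma> \<inter> A \<times> B = {}}"
    using simplicial_from_join unfolding simplicial_map_def by auto
  show "(`) to_join ` {\<sigma> \<in> cliques S. \<sigma> \<inter> A \<times> B = {}} \<subseteq> cliques J"
    using simplicial_to_join unfolding simplicial_map_def by auto
qed

lemma sum_cliques_avoiding_A_times_B:
  "(\<Sum>\<sigma>\<in>{\<sigma> \<in> cliques S. \<sigma> \<inter> A \<times> B = {}}. (-1::int) ^ (card \<sigma> - 1)) = euler_char J"
proof -
  have "inj_on from_join (verts J)"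
    using to_join_from_join by (rule inj_on_inverseI)
  then have "card (from_join ` \<tau>) = card \<tau>" if "\<tau> \<in> cliques J" for \<tau>
    using that unfolding cliques_def by (simp add: card_image inj_on_subset)
  then show ?thesis
    unfolding euler_char_def[of J]
    using sum.reindex_bij_betw[OF bij_betw_cliques_J_avoiding, of "\<lambda>\<sigma>. (-1::int) ^ (card \<sigma> - 1)"]
    by simp
qed

definition pivot :: "('a \<times> 'b) set \<Rightarrow> 'a \<times> 'b" where
  "pivot \<sigma> = (fst (SOME z. z \<in> \<sigma> \<inter> A \<times> B), y)"

lemma pivot_not_in_A_times_B: "pivot \<sigma> \<notin> A \<times> B"
  unfolding pivot_def using y_notin_B by simp

lemma pivot_in_shadow:
  assumes "\<sigma> \<inter> A \<times> B \<noteq> {}"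
  shows "pivot \<sigma> \<in> shadow \<sigma>"
proof -
  let ?z = "SOME z. z \<in> \<sigma> \<inter> A \<times> B"
  have "?z \<in> \<sigma> \<inter> A \<times> B"
    using assms by (metis all_not_in_conv someI_ex)
  then have "?z \<in> {z \<in> \<sigma>. fst z \<noteq> x}"
    using x_notin_A by auto
  then show ?thesis
    unfolding pivot_def shadow_def by (rule imageI)
qed

lemma sum_cliques_meeting_A_times_B:
  "(\<Sum>\<sigma>\<in>{\<sigma> \<in> cliques S. \<sigma> \<inter> A \<times> B \<noteq> {}}. (-1::int) ^ (card \<sigma> - 1)) = 0"
proof (rule sum_sign_toggle_eq_0[where e = pivot])
  fix \<sigma> assume \<sigma>: "\<sigma> \<in> {\<sigma> \<in> cliques S. \<sigma> \<inter> A \<times> B \<noteq> {}}"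
  then show "finite \<sigma> \<and> \<sigma> \<noteq> {}"
    using finite_clique[OF finite_verts_S] unfolding cliques_def by auto
  have inter: "toggle (pivot \<sigma>) \<sigma> \<inter> A \<times> B = \<sigma> \<inter> A \<times> B"
    by (rule toggle_inter_eq[OF pivot_not_in_A_times_B])
  then show "pivot (toggle (pivot \<sigma>) \<sigma>) = pivot \<sigma>"
    unfolding pivot_def by simp
  have "toggle (pivot \<sigma>) \<sigma> \<subseteq> \<sigma> \<union> shadow \<sigma>"
    using toggle_subset[of "pivot \<sigma>" \<sigma>] pivot_in_shadow \<sigma> by blast
  moreover have "toggle (pivot \<sigma>) \<sigma> \<noteq> {}"
    using inter \<sigma> by auto
  ultimately have "toggle (pivot \<sigma>) \<sigma> \<in> cliques S"
    using clique_subset shadow_clique \<sigma> by blast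
  then show "toggle (pivot \<sigma>) \<sigma> \<in> {\<sigma> \<in> cliques S. \<sigma> \<inter> A \<times> B \<noteq> {}}"
    using inter \<sigma> by simp
qed

lemma euler_char_S_J: "euler_char S = euler_char J"
proof -
  let ?sign = "\<lambda>\<sigma>. (-1::int) ^ (card \<sigma> - 1)"
  let ?C0 = "{\<sigma> \<in> cliques S. \<sigma> \<inter> A \<times> B = {}}" and ?C1 = "{\<sigma> \<in> cliques S. \<sigma> \<inter> A \<times> B \<noteq> {}}"
  have "sum ?sign (?C0 \<union> ?C1) = sum ?sign ?C0 + sum ?sign ?C1"
    by (rule sum.union_disjoint) (use finite_cliques[OF finite_verts_S] in auto)
  also have "?C0 \<union> ?C1 = cliques S"
    by blast
  finally show ?thesis
    unfolding euler_char_def[of S]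
    using sum_cliques_avoiding_A_times_B sum_cliques_meeting_A_times_B by simp
qed

end

theorem mainTheorem3:
  fixes G :: "'a graph" and H :: "'b graph" and x :: 'a and y :: 'b
  assumes "fin_simple_graph G" and "fin_simple_graph H"
    and "x \<in> verts G" and "y \<in> verts H"
  defines "S \<equiv> induced (strong_prod G H)
             (verts (usphere G x) \<times> verts (uball H y) \<union> verts (uball G x) \<times> verts (usphere H y))"
  shows "clique_complex_homotopy_equivalent S (zjoin (usphere G x) (usphere H y))
         \<and> euler_char S = euler_char (zjoin (usphere G x) (usphere H y))"
proof -
  interpret sphere: strong_product_sphere G H x y
    using assms(1-4) by unfold_locales
  show ?thesis
    using sphere.homotopy_equivalent_S_J sphere.euler_char_S_J
    unfolding S_def sphere.S_def sphere.J_def by blast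
qed

end
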